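(* Let $d=\{0,\dots,c-1\}$ and let $\tilde f$ be a real-valued function on row-stochastic matrices $p\in[0,1]^{n\times c}$ that is entry-wise concave, i.e., $\sum_{r\in d}p_{ir}\tilde f(\operatorname{der}(i,r;p))\le\tilde f(p)$ for all such $p$ and all $i\in[n]$. Let $p_{\mathrm{init}}$ be row-stochastic. Consider greedy derandomization: starting from $p_{\mathrm{cur}}=p_{\mathrm{init}}$, repeatedly choose $(i^*,x^* )\in\arg\min_{(i,x)\in[n]\times d}\tilde f(\operatorname{der}(i,x;p_{\mathrm{cur}}))$ and set $p_{\mathrm{cur}}\leftarrow\operatorname{der}(i^*,x^*;p_{\mathrm{cur}})$. Then there is a finite sequence of such greedy steps (with ties broken suitably) ending at $p_{\mathrm{final}}$ such that (1) every row of $p_{\mathrm{final}}$ is an indicator vector (so $p_{\mathrm{final}}$ corresponds to a point of $d^n$); (2) $\tilde f(p_{\mathrm{final}})\le\tilde f(p_{\mathrm{init}})$; (3) $\tilde f(p_{\mathrm{final}})\le\min_{(i,x)\in[n]\times d}\tilde f(\operatorname{der}(i,x;p_{\mathrm{final}}))$.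
   Context: For $p\in[0,1]^{n\times c}$, $i\in[n]$, $x\in d$, $\operatorname{der}(i,x;p)$ is the matrix equal to $p$ except that its $i$-th row is replaced by the indicator vector of $x$ (entry $1$ in column $x$, $0$ elsewhere). A matrix is row-stochastic if all entries lie in $[0,1]$ and each row sums to $1$. *)

theory Defs
  imports "HOL-Analysis.Analysis"
begin

text \<open>Matrices in [0,1]^(n x c) are rendered as real^'c^'n, with the row index
  type 'n (|'n| = n) and the column/label type 'c (|'c| = c, playing the role of d).\<close>

definition indicator_row :: "'c::finite \<Rightarrow> real^'c" where
  "indicator_row x = (\<chi> r. if r = x then 1 else 0)"

definition der :: "'n::finite \<Rightarrow> 'c::finite \<Rightarrow> real^'c^'n \<Rightarrow> real^'c^'n" where
  "der i x p = (\<chi> j. if j = i then indicator_row x else p $ j)"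

definition row_stochastic :: "real^'c::finite^'n::finite \<Rightarrow> bool" where
  "row_stochastic p \<longleftrightarrow> (\<forall>i r. 0 \<le> p $ i $ r \<and> p $ i $ r \<le> 1) \<and> (\<forall>i. (\<Sum>r\<in>UNIV. p $ i $ r) = 1)"

definition entrywise_concave :: "(real^'c::finite^'n::finite \<Rightarrow> real) \<Rightarrow> bool" where
  "entrywise_concave f \<longleftrightarrow>
     (\<forall>p i. row_stochastic p \<longrightarrow> (\<Sum>r\<in>UNIV. p $ i $ r * f (der i r p)) \<le> f p)"

definition greedy_step :: "(real^'c::finite^'n::finite \<Rightarrow> real) \<Rightarrow> real^'c^'n \<Rightarrow> real^'c^'n \<Rightarrow> bool" where
  "greedy_step f p q \<longleftrightarrow>
     (\<exists>i x. q = der i x p \<and> (\<forall>j y. f (der i x p) \<le> f (der j y p)))"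

end

theory Submission
  imports Defs
begin

text \<open>Entrywise concavity says that f at p is at least a convex combination, with the weights
  of row i, of the values f (der i r p). Hence the smallest value reachable by one derandomization
  step never exceeds f p, and if it equals f p then some supported label of every row attains it.
  Greedy runs only visit matrices whose rows are original rows or indicator rows, so the reachable
  set is finite. Take a reachable matrix of least f value and, among those, with the most indicator
  rows. It is a fixpoint of greedy descent, and a non-indicator row could be derandomized at no cost,
  contradicting maximality.\<close>

definition min_der :: "(real^'c::finite^'n::finite \<Rightarrow> real) \<Rightarrow> real^'c^'n \<Rightarrow> real" where
  "min_der f q = Min (range (\<lambda>(i, x). f (der i x q)))"

definition indicator_rows :: "real^'c::finite^'n::finite \<Rightarrow> 'n set" where
  "indicator_rows q = {j. \<exists>x. q $ j = indicator_row x}"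

lemma min_der_le: "min_der f q \<le> f (der i x q)"
  unfolding min_der_def by (rule Min_le) (auto intro: rev_image_eqI[of "(i, x)"])

lemma min_der_attained: "\<exists>i x. f (der i x q) = min_der f q"
proof -
  have "min_der f q \<in> range (\<lambda>(i, x). f (der i x q))"
    unfolding min_der_def by (rule Min_in) auto
  then show ?thesis by (auto intro: sym)
qed

lemma greedy_step_der: "f (der i x q) = min_der f q \<Longrightarrow> greedy_step f q (der i x q)"
  unfolding greedy_step_def using min_der_le by metis

lemma row_stochastic_der: "row_stochastic p \<Longrightarrow> row_stochastic (der i x p)"
proof -
  have "(\<Sum>r\<in>UNIV. indicator_row x $ r) = 1" by (simp add: indicator_row_def)
  then show "row_stochastic p \<Longrightarrow> row_stochastic (der i x p)"
    unfolding row_stochastic_def der_def by (auto simp: indicator_row_def)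
qed

lemma greedy_reachable_row_stochastic:
  "(greedy_step f)\<^sup>*\<^sup>* p q \<Longrightarrow> row_stochastic p \<Longrightarrow> row_stochastic q"
  by (induction rule: rtranclp_induct) (auto simp: greedy_step_def intro: row_stochastic_der)

lemma greedy_reachable_rows:
  "(greedy_step f)\<^sup>*\<^sup>* p q \<Longrightarrow> q $ j \<in> insert (p $ j) (range indicator_row)"
proof (induction arbitrary: j rule: rtranclp_induct)
  case (step q q')
  then obtain i x where "q' = der i x q" unfolding greedy_step_def by blast
  with step.IH[of j] show ?case by (cases "j = i") (auto simp: der_def)
qed simp

lemma finite_greedy_reachable: "finite {q. (greedy_step f)\<^sup>*\<^sup>* p q}"
proof -
  let ?A = "PiE UNIV (\<lambda>j. insert (p $ j) (range indicator_row))"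
  have "{q. (greedy_step f)\<^sup>*\<^sup>* p q} \<subseteq> (\<lambda>g. \<chi> j. g j) ` ?A"
  proof
    fix q assume "q \<in> {q. (greedy_step f)\<^sup>*\<^sup>* p q}"
    then have "(\<lambda>j. q $ j) \<in> ?A" using greedy_reachable_rows by auto
    then show "q \<in> (\<lambda>g. \<chi> j. g j) ` ?A" by (auto intro: rev_image_eqI)
  qed
  moreover have "finite ?A" by (intro finite_PiE) auto
  ultimately show ?thesis using finite_subset by blast
qed

lemma finite_ex_min_then_max:
  fixes f :: "'a \<Rightarrow> 'b::linorder" and g :: "'a \<Rightarrow> 'c::linorder"
  assumes "finite S" "S \<noteq> {}"
  obtains q where "q \<in> S" "\<And>q'. q' \<in> S \<Longrightarrow> f q \<le> f q'"
    "\<And>q'. q' \<in> S \<Longrightarrow> f q' = f q \<Longrightarrow> g q' \<le> g q"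
proof -
  define T where "T = {q \<in> S. f q = Min (f ` S)}"
  have "Min (f ` S) \<in> f ` S" using assms by (intro Min_in) auto
  then have "finite T" "T \<noteq> {}" using assms(1) unfolding T_def by auto
  then have "Max (g ` T) \<in> g ` T" by (intro Max_in) auto
  then obtain q where "q \<in> T" "g q = Max (g ` T)" by auto
  with assms \<open>finite T\<close> show ?thesis
    by (intro that) (auto simp: T_def)
qed

lemma min_der_le_self:
  fixes q :: "real^'c::finite^'n::finite"
  assumes "entrywise_concave f" "row_stochastic q"
  shows "min_der f q \<le> f q"
proof -
  obtain i :: 'n where True by blast
  have "min_der f q = (\<Sum>r\<in>UNIV. q $ i $ r * min_der f q)"
    using assms(2) by (simp add: row_stochastic_def sum_distrib_right[symmetric])
  also have "\<dots> \<le> (\<Sum>r\<in>UNIV. q $ i $ r * f (der i r q))"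
    using assms(2) unfolding row_stochastic_def by (intro sum_mono mult_left_mono min_der_le) auto
  also have "\<dots> \<le> f q" using assms unfolding entrywise_concave_def by blast
  finally show ?thesis .
qed

lemma concave_tight_row:
  assumes "entrywise_concave f" "row_stochastic q" "f q \<le> min_der f q"
  shows "\<exists>x. 0 < q $ i $ x \<and> f (der i x q) = min_der f q"
proof -
  let ?gap = "\<lambda>r. q $ i $ r * (f (der i r q) - min_der f q)"
  have sum1: "(\<Sum>r\<in>UNIV. q $ i $ r) = 1" and nonneg: "\<And>r. 0 \<le> q $ i $ r"
    using assms(2) unfolding row_stochastic_def by auto
  have gap_nonneg: "\<And>r. 0 \<le> ?gap r"
    using nonneg min_der_le[of f q i] by (simp add: mult_nonneg_nonneg)
  have "(\<Sum>r\<in>UNIV. ?gap r)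
      = (\<Sum>r\<in>UNIV. q $ i $ r * f (der i r q)) - (\<Sum>r\<in>UNIV. q $ i $ r) * min_der f q"
    by (simp add: right_diff_distrib sum_subtractf sum_distrib_right)
  also have "\<dots> \<le> f q - min_der f q"
    using assms(1,2) sum1 unfolding entrywise_concave_def by simp
  also have "\<dots> \<le> 0" using assms(3) by simp
  finally have "(\<Sum>r\<in>UNIV. ?gap r) = 0"
    using gap_nonneg by (meson antisym sum_nonneg)
  then have "\<forall>r. ?gap r = 0"
    using gap_nonneg by (simp add: sum_nonneg_eq_0_iff)
  moreover obtain x where "q $ i $ x \<noteq> 0"
    using sum1 by (metis sum.neutral zero_neq_one)
  ultimately show ?thesis using nonneg[of x] by (intro exI[of _ x]) auto
qed

lemma card_indicator_rows_der:
  assumes "i \<notin> indicator_rows q"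
  shows "card (indicator_rows q) < card (indicator_rows (der i x q))"
proof -
  have "indicator_rows q \<subset> indicator_rows (der i x q)"
    using assms unfolding indicator_rows_def der_def by auto
  then show ?thesis by (intro psubset_card_mono) auto
qed

lemma concave_all_rows_indicator:
  assumes "entrywise_concave f" "row_stochastic q" "f q = min_der f q"
    and no_gain: "\<And>i x. f (der i x q) = f q \<Longrightarrow>
      card (indicator_rows (der i x q)) \<le> card (indicator_rows q)"
  shows "indicator_rows q = UNIV"
proof (rule ccontr)
  assume "indicator_rows q \<noteq> UNIV"
  then obtain i where i: "i \<notin> indicator_rows q" by blast
  obtain x where "f (der i x q) = f q"
    using concave_tight_row[OF assms(1,2)] assms(3) by fastforce
  with no_gain card_indicator_rows_der[OF i, of x] show False by fastforce
qed

theorem mainTheorem14: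
  fixes f :: "real^'c::finite^'n::finite \<Rightarrow> real"
    and p_init :: "real^'c^'n"
  assumes "entrywise_concave f"
    and "row_stochastic p_init"
  shows "\<exists>p_final. (greedy_step f)\<^sup>*\<^sup>* p_init p_final
           \<and> (\<forall>i. \<exists>x. p_final $ i = indicator_row x)
           \<and> f p_final \<le> f p_init
           \<and> f p_final \<le> Min (range (\<lambda>(i, x). f (der i x p_final)))"
proof -
  define S where "S = {q. (greedy_step f)\<^sup>*\<^sup>* p_init q}"
  have "p_init \<in> S" unfolding S_def by simp
  moreover have "finite S" unfolding S_def by (rule finite_greedy_reachable)
  ultimately obtain q where "q \<in> S" and f_min: "\<And>q'. q' \<in> S \<Longrightarrow> f q \<le> f q'"
    and rows_max: "\<And>q'. q' \<in> S \<Longrightarrow> f q' = f q \<Longrightarrow>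
      card (indicator_rows q') \<le> card (indicator_rows q)"
    using finite_ex_min_then_max[of S f "\<lambda>q. card (indicator_rows q)"] by blast
  have succ: "\<And>i x. f (der i x q) = min_der f q \<Longrightarrow> der i x q \<in> S"
    using \<open>q \<in> S\<close> greedy_step_der unfolding S_def
    by (metis mem_Collect_eq rtranclp.rtrancl_into_rtrancl)
  have rs: "row_stochastic q"
    using \<open>q \<in> S\<close> assms(2) greedy_reachable_row_stochastic unfolding S_def by blast
  obtain i x where "f (der i x q) = min_der f q" using min_der_attained by blast
  with succ f_min have "f q \<le> min_der f q" by metis
  then have eq: "f q = min_der f q" using min_der_le_self[OF assms(1) rs] by simp
  have "indicator_rows q = UNIV"
    using concave_all_rows_indicator[OF assms(1) rs eq] succ rows_max eq by metis
  then show ?thesis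
    using \<open>q \<in> S\<close> f_min[OF \<open>p_init \<in> S\<close>] eq
    unfolding S_def indicator_rows_def min_der_def by (intro exI[of _ q]) auto
qed

end
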